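(* Let $f(z)=\sum_{k\ge0}a_kz^k$ have finite radius of convergence $0<R<\infty$, and let $n$ satisfy $a_n\neq 0$. Then \[ \lim_{r\to R}\kappa(n,r)=\frac{\|f\|_{H^1(D_R)}}{|a_n|R^n}, \] and this limit is finite if and only if $f$ belongs to the Hardy space $H^1(D_R)$. If $n>\nu$ then $\kappa(n,r)$ is strictly decreasing for $0<r<R$; whereas if $\nu=\infty$ then, for all $n$ with $a_n\ne0$, $\kappa(n,r)$ is strictly increasing for $r$ in some interval $(r_0,R)$.
   Context: For $0<r<R$: $M_1(r)=\frac{1}{2\pi}\int_0^{2\pi}|f(re^{i\theta})|\,d\theta$, $\kappa(n,r)=M_1(r)/(|a_n|r^n)$. The Hardy norm is $\|f\|_{H^1(D_R)}=\sup_{0<r<R}M_1(r)=\lim_{r\to R}M_1(r)\in(0,\infty]$; $f\in H^1(D_R)$ means this is finite. With $\sigma(r)=\log M_1(r)$ (which is differentiable with $\sigma'>0$ on $(0,R)$), $\nu=\sup_{0<r<R} r\sigma'(r)=\lim_{r\to R}r\sigma'(r)\in(0,\infty]$. *)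

theory Defs
  imports "HOL-Analysis.Analysis"
begin

definition pser :: "(nat \<Rightarrow> complex) \<Rightarrow> complex \<Rightarrow> complex" where
  "pser a z = (\<Sum>k. a k * z ^ k)"

definition M1 :: "(nat \<Rightarrow> complex) \<Rightarrow> real \<Rightarrow> real" where
  "M1 a r = integral {0..2*pi} (\<lambda>\<theta>. norm (pser a (complex_of_real r * cis \<theta>))) / (2*pi)"

definition kappa :: "(nat \<Rightarrow> complex) \<Rightarrow> nat \<Rightarrow> real \<Rightarrow> real" where
  "kappa a n r = M1 a r / (norm (a n) * r ^ n)"

definition hardy_norm :: "(nat \<Rightarrow> complex) \<Rightarrow> real \<Rightarrow> ereal" where
  "hardy_norm a R = (SUP r\<in>{0<..<R}. ereal (M1 a r))"

definition in_hardy_H1 :: "(nat \<Rightarrow> complex) \<Rightarrow> real \<Rightarrow> bool" where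
  "in_hardy_H1 a R \<longleftrightarrow> hardy_norm a R < \<infinity>"

definition sigma :: "(nat \<Rightarrow> complex) \<Rightarrow> real \<Rightarrow> real" where
  "sigma a r = ln (M1 a r)"

definition nu :: "(nat \<Rightarrow> complex) \<Rightarrow> real \<Rightarrow> ereal" where
  "nu a R = (SUP r\<in>{0<..<R}. ereal (r * deriv (sigma a) r))"

end

theory Submission
  imports Defs "HOL-Complex_Analysis.Complex_Analysis"
begin

text \<open>
  For 0 < r < R and e > 0 there is a holomorphic F on the disc with |F z| \<le> M1 |z| and
  |F r| \<ge> M1 r - e: average f over circles against a continuous approximation of the conjugate
  phase of f on the circle of radius r. The maximum modulus principle, applied to F and to
  z^p F(z)^q on annuli, shows that M1 is nondecreasing (which gives the limit) and satisfies
  Hadamard's three circles inequality for all rational exponents p/q, so sigma is convex in log r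
  and r sigma'(r) is nondecreasing. M1 is differentiable: off the finitely many zeros of f on the
  circle, |f| is differentiable in the radius with Lipschitz difference quotients. Finally
  log kappa(n, r) = sigma(r) - n log r - log |a n| has derivative (r sigma'(r) - n) / r.
\<close>

lemma conv_radius_le_of_norm_le:
  fixes a b :: "nat \<Rightarrow> 'a::{real_normed_div_algebra,banach}"
  assumes "\<And>k. norm (b k) \<le> norm (a k)"
  shows "conv_radius a \<le> conv_radius b"
proof (rule conv_radius_geI_ex')
  fix s :: real assume s: "0 < s" "ereal s < conv_radius a"
  have "summable (\<lambda>k. norm (a k * of_real s ^ k))"
    by (rule abs_summable_in_conv_radius) (use s in simp)
  then show "summable (\<lambda>k. b k * of_real s ^ k)"
    by (rule summable_norm_cancel[OF summable_comparison_test[rotated]])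
       (auto simp: norm_mult intro!: mult_right_mono assms)
qed

lemma holomorphic_on_pser:
  assumes "ereal R \<le> conv_radius a"
  shows "pser a holomorphic_on ball 0 R"
proof -
  have "(pser a has_field_derivative pser (diffs a) z) (at z)" if "z \<in> ball 0 R" for z
    unfolding pser_def
    by (rule has_field_derivative_powser) (use that assms in \<open>auto intro: less_le_trans[of _ "ereal R"]\<close>)
  then show ?thesis
    unfolding holomorphic_on_def field_differentiable_def
    using has_field_derivative_at_within by blast
qed

lemma holomorphic_lipschitz_on_cball:
  assumes g: "g holomorphic_on ball c R" and "\<rho> < R"
  obtains L where "0 \<le> L" "\<And>x y. x \<in> cball c \<rho> \<Longrightarrow> y \<in> cball c \<rho> \<Longrightarrow> norm (g x - g y) \<le> L * norm (x - y)"
proof -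
  have sub: "cball c \<rho> \<subseteq> ball c R" using assms by auto
  have "continuous_on (cball c \<rho>) (deriv g)"
    using holomorphic_on_imp_continuous_on[OF holomorphic_deriv[OF g open_ball]] sub
    by (rule continuous_on_subset)
  then have "bounded (deriv g ` cball c \<rho>)"
    by (intro compact_imp_bounded compact_continuous_image compact_cball)
  then obtain L where L: "\<And>z. z \<in> cball c \<rho> \<Longrightarrow> norm (deriv g z) \<le> L"
    unfolding bounded_iff by (metis image_eqI)
  show thesis
  proof (rule that[of "max L 0"])
    show "norm (g x - g y) \<le> max L 0 * norm (x - y)" if "x \<in> cball c \<rho>" "y \<in> cball c \<rho>" for x y
      by (rule field_differentiable_bound[OF convex_cball _ _ that])
         (use sub L in \<open>auto intro!: holomorphic_derivI[OF g] max.coboundedI1\<close>)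
  qed simp
qed

lemma integral_periodic_shift:
  fixes g :: "real \<Rightarrow> real"
  assumes cont: "continuous_on UNIV g" and per: "\<And>t. g (t + 2*pi) = g t"
    and \<alpha>: "0 \<le> \<alpha>" "\<alpha> \<le> 2*pi"
  shows "integral {0..2*pi} (\<lambda>t. g (t + \<alpha>)) = integral {0..2*pi} g"
proof -
  have int: "\<And>x y. g integrable_on {x..y}"
    by (rule integrable_continuous_real) (rule continuous_on_subset[OF cont], auto)
  have "integral {0..2*pi} (\<lambda>t. g (t + \<alpha>)) = integral {\<alpha>..2*pi+\<alpha>} g"
    using integral_shift_real_ivl[of \<alpha> \<alpha> "2*pi+\<alpha>" g] by simp
  also have "\<dots> = integral {\<alpha>..2*pi} g + integral {2*pi..2*pi+\<alpha>} g"
    by (rule Henstock_Kurzweil_Integration.integral_combine[symmetric]) (use \<alpha> int in auto)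
  also have "integral {2*pi..2*pi+\<alpha>} g = integral {0..\<alpha>} g"
    using integral_shift_real_ivl[of "2*pi" "2*pi" "2*pi+\<alpha>" g] per by simp
  also have "integral {\<alpha>..2*pi} g + integral {0..\<alpha>} g = integral {0..2*pi} g"
    by (subst add.commute, rule Henstock_Kurzweil_Integration.integral_combine) (use \<alpha> int in auto)
  finally show ?thesis .
qed

lemma has_real_derivative_integral_finite_exceptions:
  fixes h :: "real \<Rightarrow> real \<Rightarrow> real"
  assumes B: "finite B" and \<delta>: "0 < \<delta>" and L: "0 \<le> L"
    and int: "\<And>s. s \<in> ball r \<delta> \<Longrightarrow> h s integrable_on {c..d}"
    and lip: "\<And>s t. s \<in> ball r \<delta> \<Longrightarrow> t \<in> {c..d} \<Longrightarrow> \<bar>h s t - h r t\<bar> \<le> L * \<bar>s - r\<bar>"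
    and der: "\<And>t. t \<in> {c..d} \<Longrightarrow> t \<notin> B \<Longrightarrow> ((\<lambda>s. h s t) has_real_derivative D t) (at r)"
  shows "((\<lambda>s. integral {c..d} (h s)) has_real_derivative integral {c..d} D) (at r)"
proof -
  define G where "G = (\<lambda>t. if t \<in> B then 0 else D t)"
  have "((\<lambda>s. (integral {c..d} (h s) - integral {c..d} (h r)) / (s - r)) \<longlongrightarrow> integral {c..d} G)
          (at r within ball r \<delta>)"
    unfolding tendsto_at_iff_sequentially
  proof (intro allI impI)
    fix X :: "nat \<Rightarrow> real"
    assume X: "\<forall>i. X i \<in> ball r \<delta> - {r}" and Xr: "X \<longlonglongrightarrow> r"
    define Q where "Q = (\<lambda>i t. if t \<in> B then 0 else (h (X i) t - h r t) / (X i - r))"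
    have Xi: "X i \<in> ball r \<delta>" "X i - r \<noteq> 0" for i
      using X by auto
    have Qint: "(Q i has_integral (integral {c..d} (h (X i)) - integral {c..d} (h r)) / (X i - r)) {c..d}" for i
    proof -
      have "((\<lambda>t. (h (X i) t - h r t) / (X i - r)) has_integral
              (integral {c..d} (h (X i)) - integral {c..d} (h r)) / (X i - r)) {c..d}"
        by (intro has_integral_divide has_integral_diff integrable_integral int Xi) (use \<delta> in simp)
      then show ?thesis
        by (rule has_integral_spike_finite[OF B, rotated]) (auto simp: Q_def)
    qed
    have bound: "norm (Q i t) \<le> L" if "t \<in> {c..d}" for i t
      using lip[OF Xi(1) that] Xi(2)[of i] L by (simp add: Q_def abs_divide divide_le_eq)
    have conv: "(\<lambda>i. Q i t) \<longlonglongrightarrow> G t" if t: "t \<in> {c..d}" for t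
    proof (cases "t \<in> B")
      case False
      have "((\<lambda>s. (h s t - h r t) / (s - r)) \<longlongrightarrow> D t) (at r)"
        using der[OF t False] unfolding has_field_derivative_iff .
      then have "((\<lambda>s. (h s t - h r t) / (s - r)) \<circ> X) \<longlonglongrightarrow> D t"
        unfolding tendsto_at_iff_sequentially using X Xr by auto
      then show ?thesis using False by (simp add: Q_def G_def o_def)
    qed (simp add: Q_def G_def)
    have "(\<lambda>i. integral {c..d} (Q i)) \<longlonglongrightarrow> integral {c..d} G"
      by (rule dominated_convergence[where h = "\<lambda>_. L", OF _ _ bound conv]) (use Qint in auto)
    moreover have "integral {c..d} (Q i) = (integral {c..d} (h (X i)) - integral {c..d} (h r)) / (X i - r)" for i
      using Qint by (rule integral_unique)
    ultimately show "((\<lambda>s. (integral {c..d} (h s) - integral {c..d} (h r)) / (s - r)) \<circ> X)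
                 \<longlonglongrightarrow> integral {c..d} G"
      by (simp add: o_def)
  qed
  moreover have "integral {c..d} G = integral {c..d} D"
    by (rule integral_spike[of B]) (auto simp: G_def B)
  ultimately show ?thesis
    unfolding has_field_derivative_iff using at_within_open[of r "ball r \<delta>"] \<delta> by simp
qed

lemma DERIV_pos_neg_imp_interior_max:
  fixes g :: "real \<Rightarrow> real"
  assumes r: "r1 < r2"
    and der: "\<And>x. r1 \<le> x \<Longrightarrow> x \<le> r2 \<Longrightarrow> (g has_real_derivative g' x) (at x)"
    and pos: "0 < g' r1" and neg: "g' r2 < 0"
  obtains m where "r1 < m" "m < r2" "g r1 < g m" "g r2 < g m"
proof -
  have "continuous_on {r1..r2} g"
    using der by (intro DERIV_atLeastAtMost_imp_continuous_on) auto
  then obtain m where m: "m \<in> {r1..r2}" and max: "\<And>y. y \<in> {r1..r2} \<Longrightarrow> g y \<le> g m"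
    using continuous_attains_sup[OF compact_Icc _ \<open>continuous_on {r1..r2} g\<close>] r by auto
  obtain d where d: "d > 0" "\<And>h. h > 0 \<Longrightarrow> h < d \<Longrightarrow> g r1 < g (r1 + h)"
    using DERIV_pos_inc_right[OF der pos] r by auto
  have "g r1 < g (r1 + min (d/2) (r2 - r1))" using d r by (intro d(2)) auto
  also have "\<dots> \<le> g m" using d r by (intro max) auto
  finally have 1: "g r1 < g m" .
  obtain d' where d': "d' > 0" "\<And>h. h > 0 \<Longrightarrow> h < d' \<Longrightarrow> g r2 < g (r2 - h)"
    using DERIV_neg_dec_left[OF der neg] r by auto
  have "g r2 < g (r2 - min (d'/2) (r2 - r1))" using d' r by (intro d'(2)) auto
  also have "\<dots> \<le> g m" using d' r by (intro max) auto
  finally have 2: "g r2 < g m" .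
  show ?thesis using that 1 2 m by (auto simp: less_le)
qed

lemma x_mult_deriv_ln_mono_of_weighted_max:
  fixes \<phi> :: "real \<Rightarrow> real"
  assumes pos: "\<And>x. 0 < x \<Longrightarrow> x < R \<Longrightarrow> 0 < \<phi> x"
    and der: "\<And>x. 0 < x \<Longrightarrow> x < R \<Longrightarrow> ((\<lambda>x. ln (\<phi> x)) has_real_derivative \<sigma>' x) (at x)"
    and max: "\<And>(p::int) (q::nat) r1 r r2. 0 < q \<Longrightarrow> 0 < r1 \<Longrightarrow> r1 < r \<Longrightarrow> r < r2 \<Longrightarrow> r2 < R \<Longrightarrow>
                r powi p * \<phi> r ^ q \<le> max (r1 powi p * \<phi> r1 ^ q) (r2 powi p * \<phi> r2 ^ q)"
    and r: "0 < r1" "r1 < r2" "r2 < R"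
  shows "r1 * \<sigma>' r1 \<le> r2 * \<sigma>' r2"
proof (rule ccontr)
  assume "\<not> ?thesis"
  then obtain \<beta> where \<beta>: "\<beta> \<in> \<rat>" "- (r1 * \<sigma>' r1) < \<beta>" "\<beta> < - (r2 * \<sigma>' r2)"
    using Rats_dense_in_real[of "- (r1 * \<sigma>' r1)" "- (r2 * \<sigma>' r2)"] by auto
  obtain p q0 :: int where q0: "0 < q0" and pq0: "\<beta> = of_int p / of_int q0"
    using Rats_cases'[OF \<beta>(1)] by metis
  define q where "q = nat q0"
  have q: "0 < q" and pq: "\<beta> = of_int p / of_nat q"
    using q0 pq0 unfolding q_def by auto
  define \<Phi> where "\<Phi> = (\<lambda>x. q * ln (\<phi> x) + p * ln x)"
  have \<Phi>_deriv: "(\<Phi> has_real_derivative (q * (x * \<sigma>' x) + p) / x) (at x)" if "0 < x" "x < R" for x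
  proof -
    have "(\<Phi> has_real_derivative q * \<sigma>' x + p * (1/x)) (at x)"
      unfolding \<Phi>_def by (intro DERIV_add DERIV_cmult der DERIV_ln_divide that)
    then show ?thesis using that by (simp add: field_simps)
  qed
  obtain m where m: "r1 < m" "m < r2" "\<Phi> r1 < \<Phi> m" "\<Phi> r2 < \<Phi> m"
  proof (rule DERIV_pos_neg_imp_interior_max[OF r(2)])
    show "(\<Phi> has_real_derivative (q * (x * \<sigma>' x) + p) / x) (at x)" if "r1 \<le> x" "x \<le> r2" for x
      using that r by (intro \<Phi>_deriv) auto
    show "0 < (q * (r1 * \<sigma>' r1) + p) / r1" "(q * (r2 * \<sigma>' r2) + p) / r2 < 0"
      using \<beta>(2,3) q r unfolding pq by (auto simp: field_simps divide_neg_pos)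
  qed
  have \<Phi>_eq: "\<Phi> x = ln (x powi p * \<phi> x ^ q)" if "0 < x" "x < R" for x
    using that pos[OF that] by (simp add: \<Phi>_def ln_mult ln_realpow powr_real_of_int'[symmetric] ln_powr)
  have w: "0 < x powi p * \<phi> x ^ q" if "0 < x" "x < R" for x
    using that pos[OF that] by simp
  have "\<Phi> m \<le> max (\<Phi> r1) (\<Phi> r2)"
  proof (cases "r1 powi p * \<phi> r1 ^ q \<le> r2 powi p * \<phi> r2 ^ q")
    case True
    then have "m powi p * \<phi> m ^ q \<le> r2 powi p * \<phi> r2 ^ q"
      using max[OF q r(1) m(1,2) r(3), of p] by simp
    then have "\<Phi> m \<le> \<Phi> r2" using w[of m] w[of r2] m r by (simp add: \<Phi>_eq)
    then show ?thesis by simp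
  next
    case False
    then have "m powi p * \<phi> m ^ q \<le> r1 powi p * \<phi> r1 ^ q"
      using max[OF q r(1) m(1,2) r(3), of p] by simp
    then have "\<Phi> m \<le> \<Phi> r1" using w[of m] w[of r1] m r by (simp add: \<Phi>_eq)
    then show ?thesis by simp
  qed
  then show False using m by simp
qed

locale power_series_disc =
  fixes a :: "nat \<Rightarrow> complex" and R :: real
  assumes conv_radius_eq: "conv_radius a = ereal R" and radius_pos: "0 < R"
begin

abbreviation f :: "complex \<Rightarrow> complex" where "f \<equiv> pser a"

lemma pser_holomorphic: "f holomorphic_on ball 0 R"
  using holomorphic_on_pser conv_radius_eq by simp

lemma continuous_on_circle: "norm z < R \<Longrightarrow> continuous_on UNIV (\<lambda>t. f (z * cis t))"
  by (rule continuous_on_compose2[OF holomorphic_on_imp_continuous_on[OF pser_holomorphic]])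
     (auto intro!: continuous_intros simp: norm_mult)

lemma integral_norm_circle:
  assumes z: "norm z < R"
  shows "integral {0..2*pi} (\<lambda>t. norm (f (z * cis t))) = 2*pi * M1 a (norm z)"
proof -
  define \<alpha> where "\<alpha> = (if Arg z \<ge> 0 then Arg z else Arg z + 2*pi)"
  have \<alpha>: "0 \<le> \<alpha>" "\<alpha> \<le> 2*pi" using Arg_bounded[of z] unfolding \<alpha>_def by auto
  have "cis \<alpha> = cis (Arg z)" unfolding \<alpha>_def by (auto simp: cis.ctr)
  then have z_polar: "z = complex_of_real (norm z) * cis \<alpha>"
    using rcis_cmod_Arg[of z] by (simp add: rcis_def)
  define g where "g = (\<lambda>t. norm (f (complex_of_real (norm z) * cis t)))"
  have "continuous_on UNIV g" unfolding g_def
    by (intro continuous_intros continuous_on_circle) (use z in auto)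
  moreover have "g (t + 2*pi) = g t" for t
    unfolding g_def by (simp add: cis.ctr)
  ultimately have "integral {0..2*pi} (\<lambda>t. g (t + \<alpha>)) = integral {0..2*pi} g"
    using integral_periodic_shift \<alpha> by blast
  moreover have "(\<lambda>t. norm (f (z * cis t))) = (\<lambda>t. g (t + \<alpha>))"
    by (rule ext, subst z_polar) (simp add: g_def mult.assoc cis_mult add.commute)
  ultimately show ?thesis unfolding g_def M1_def by simp
qed

lemma has_integral_circle_times:
  assumes z: "norm z < R" and \<psi>: "continuous_on {0..2*pi} \<psi>"
  shows "((\<lambda>t. f (z * cis t) * \<psi> t) has_integral
           (\<Sum>k. a k * z^k * integral {0..2*pi} (\<lambda>t. cis t ^ k * \<psi> t))) {0..2*pi}"
proof -
  obtain B where B: "\<And>t. t \<in> {0..2*pi} \<Longrightarrow> norm (\<psi> t) \<le> B"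
    using compact_imp_bounded[OF compact_continuous_image[OF \<psi> compact_Icc]]
    unfolding bounded_iff by (metis image_eqI)
  define u where "u = (\<lambda>k t. a k * z^k * (cis t ^ k * \<psi> t))"
  have sum_norm: "summable (\<lambda>k. norm (a k * z ^ k))"
    by (rule abs_summable_in_conv_radius) (use z conv_radius_eq in simp)
  have lim: "uniform_limit {0..2*pi} (\<lambda>N t. \<Sum>k<N. u k t) (\<lambda>t. \<Sum>k. u k t) sequentially"
  proof (rule Weierstrass_m_test)
    show "summable (\<lambda>k. norm (a k * z ^ k) * B)"
      using sum_norm by (rule summable_mult2)
    show "norm (u k t) \<le> norm (a k * z ^ k) * B" if "t \<in> {0..2*pi}" for k t
      unfolding u_def using B[OF that] by (simp add: norm_mult norm_power mult_left_mono)
  qed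
  have cont: "continuous_on {0..2*pi} (\<lambda>t. \<Sum>k<N. u k t)" for N
    unfolding u_def by (intro continuous_intros \<psi>)
  obtain I J where I: "\<And>N. ((\<lambda>t. \<Sum>k<N. u k t) has_integral I N) {0..2*pi}"
    and J: "((\<lambda>t. \<Sum>k. u k t) has_integral J) {0..2*pi}" and IJ: "I \<longlonglongrightarrow> J"
    using uniform_limit_integral[OF lim cont] by auto
  have sum_eq: "(\<Sum>k. u k t) = f (z * cis t) * \<psi> t" for t
  proof -
    have "summable (\<lambda>k. a k * (z * cis t) ^ k)"
      by (rule summable_in_conv_radius) (simp add: z norm_mult conv_radius_eq)
    then show ?thesis
      unfolding u_def pser_def
      by (simp add: suminf_mult2 power_mult_distrib mult.assoc)
  qed
  have "I N = (\<Sum>k<N. a k * z^k * integral {0..2*pi} (\<lambda>t. cis t ^ k * \<psi> t))" for N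
  proof -
    have "(\<lambda>t. cis t ^ k * \<psi> t) integrable_on {0..2*pi}" for k
      by (intro integrable_continuous_real continuous_intros \<psi>)
    then have "((\<lambda>t. \<Sum>k<N. u k t) has_integral
           (\<Sum>k<N. a k * z^k * integral {0..2*pi} (\<lambda>t. cis t ^ k * \<psi> t))) {0..2*pi}"
      unfolding u_def by (intro has_integral_sum finite_lessThan has_integral_mult_right integrable_integral)
    then show ?thesis using I has_integral_unique by blast
  qed
  then have "I = (\<lambda>N. \<Sum>k<N. a k * z^k * integral {0..2*pi} (\<lambda>t. cis t ^ k * \<psi> t))"
    by auto
  then have "(\<lambda>k. a k * z^k * integral {0..2*pi} (\<lambda>t. cis t ^ k * \<psi> t)) sums J"
    using IJ by (simp add: sums_def)
  then show ?thesis using J sum_eq by (simp add: sums_iff)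
qed

lemma holomorphic_on_circle_integral:
  assumes \<psi>: "continuous_on {0..2*pi} \<psi>" and \<psi>_le: "\<And>t. norm (\<psi> t) \<le> 1"
  shows "(\<lambda>z. integral {0..2*pi} (\<lambda>t. f (z * cis t) * \<psi> t)) holomorphic_on ball 0 R"
proof -
  define c where "c = (\<lambda>k. integral {0..2*pi} (\<lambda>t. cis t ^ k * \<psi> t))"
  have "norm (c k) \<le> integral {0..2*pi} (\<lambda>t. 1::real)" for k
    unfolding c_def
    by (rule integral_norm_bound_integral)
       (auto intro!: integrable_continuous_real continuous_intros \<psi> simp: norm_mult norm_power \<psi>_le)
  then have "norm (a k * c k) \<le> norm (complex_of_real (2*pi) * a k)" for k
    by (simp add: norm_mult mult.commute mult_left_mono)
  then have "conv_radius (\<lambda>k. complex_of_real (2*pi) * a k) \<le> conv_radius (\<lambda>k. a k * c k)"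
    by (rule conv_radius_le_of_norm_le)
  then have "pser (\<lambda>k. a k * c k) holomorphic_on ball 0 R"
    by (intro holomorphic_on_pser) (simp add: conv_radius_cmult_left conv_radius_eq)
  then show ?thesis
  proof (rule holomorphic_transform)
    fix z :: complex assume "z \<in> ball 0 R"
    then have "integral {0..2*pi} (\<lambda>t. f (z * cis t) * \<psi> t) = (\<Sum>k. a k * z^k * c k)"
      using has_integral_circle_times[OF _ \<psi>] unfolding c_def by (simp add: integral_unique)
    then show "pser (\<lambda>k. a k * c k) z = integral {0..2*pi} (\<lambda>t. f (z * cis t) * \<psi> t)"
      by (simp add: pser_def ac_simps)
  qed
qed

lemma norm_circle_integral_le:
  assumes z: "norm z < R" and \<psi>: "continuous_on {0..2*pi} \<psi>" and \<psi>_le: "\<And>t. norm (\<psi> t) \<le> 1"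
  shows "norm (integral {0..2*pi} (\<lambda>t. f (z * cis t) * \<psi> t)) \<le> 2*pi * M1 a (norm z)"
proof -
  have "norm (integral {0..2*pi} (\<lambda>t. f (z * cis t) * \<psi> t))
        \<le> integral {0..2*pi} (\<lambda>t. norm (f (z * cis t)))"
    by (rule integral_norm_bound_integral)
       (auto intro!: integrable_continuous_real continuous_intros \<psi>
             continuous_on_subset[OF continuous_on_circle[OF z]] simp: norm_mult mult_left_le \<psi>_le)
  then show ?thesis using integral_norm_circle[OF z] by simp
qed

lemma circle_integral_norming:
  assumes r: "0 \<le> r" "r < R" and e: "0 < e"
  obtains \<psi> where "continuous_on {0..2*pi} \<psi>" "\<And>t. norm (\<psi> t) \<le> 1"
    "2*pi * (M1 a r - e) \<le> norm (integral {0..2*pi} (\<lambda>t. f (complex_of_real r * cis t) * \<psi> t))"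
proof
  define h where "h = (\<lambda>t. f (complex_of_real r * cis t))"
  define \<psi> where "\<psi> = (\<lambda>t. cnj (h t) / complex_of_real (max (norm (h t)) e))"
  define q where "q = (\<lambda>t. (norm (h t))^2 / max (norm (h t)) e)"
  have h: "continuous_on {0..2*pi} h"
    unfolding h_def by (rule continuous_on_subset[OF continuous_on_circle]) (use r in auto)
  show \<psi>_cont: "continuous_on {0..2*pi} \<psi>"
    unfolding \<psi>_def by (intro continuous_intros h) (use e in auto)
  show "norm (\<psi> t) \<le> 1" for t
    using e unfolding \<psi>_def by (auto simp: norm_divide divide_le_eq_1 max_def)
  have q_cont: "continuous_on {0..2*pi} q"
    unfolding q_def by (intro continuous_intros h) (use e in auto)
  have "integral {0..2*pi} (\<lambda>t. h t * \<psi> t) = integral {0..2*pi} (\<lambda>t. complex_of_real (q t))"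
    unfolding \<psi>_def q_def using complex_norm_square by (simp add: field_simps)
  also have "\<dots> = complex_of_real (integral {0..2*pi} q)"
    using q_cont by (intro integral_unique has_integral_of_real integrable_integral integrable_continuous_real)
  finally have hq: "norm (integral {0..2*pi} (\<lambda>t. h t * \<psi> t)) = \<bar>integral {0..2*pi} q\<bar>"
    by simp
  have "integral {0..2*pi} (\<lambda>t. norm (h t) - e) \<le> integral {0..2*pi} q"
  proof (rule integral_le)
    show "(\<lambda>t. norm (h t) - e) integrable_on {0..2*pi}" "q integrable_on {0..2*pi}"
      by (intro integrable_continuous_real continuous_intros h q_cont)+
    show "norm (h t) - e \<le> q t" for t
      using e unfolding q_def
      by (cases "norm (h t) \<le> e") (auto simp: power2_eq_square intro: order_trans[OF _ divide_nonneg_pos[of _ e]])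
  qed
  moreover have "integral {0..2*pi} (\<lambda>t. norm (h t) - e) = 2*pi * M1 a r - 2*pi*e"
    using integrable_continuous_real[OF continuous_on_norm[OF h]]
    by (subst integral_diff) (auto simp: h_def M1_def)
  ultimately show "2*pi * (M1 a r - e) \<le> norm (integral {0..2*pi} (\<lambda>t. f (complex_of_real r * cis t) * \<psi> t))"
    using hq unfolding h_def by (simp add: algebra_simps)
qed

lemma M1_approx_by_holomorphic:
  assumes r: "0 \<le> r" "r < R" and e: "0 < e"
  obtains F where "F holomorphic_on ball 0 R" "\<And>z. norm z < R \<Longrightarrow> norm (F z) \<le> M1 a (norm z)"
    "M1 a r - e \<le> norm (F (complex_of_real r))"
proof -
  obtain \<psi> where \<psi>: "continuous_on {0..2*pi} \<psi>" "\<And>t. norm (\<psi> t) \<le> 1"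
    and norming: "2*pi * (M1 a r - e) \<le> norm (integral {0..2*pi} (\<lambda>t. f (complex_of_real r * cis t) * \<psi> t))"
    using circle_integral_norming[OF r e] by blast
  define F where "F = (\<lambda>z. integral {0..2*pi} (\<lambda>t. f (z * cis t) * \<psi> t) / (2*pi))"
  show thesis
  proof
    show "F holomorphic_on ball 0 R"
      unfolding F_def by (intro holomorphic_intros holomorphic_on_circle_integral[OF \<psi>]) simp
    show "norm (F z) \<le> M1 a (norm z)" if "norm z < R" for z
      using norm_circle_integral_le[OF that \<psi>] by (simp add: F_def norm_divide divide_le_eq mult.commute)
    show "M1 a r - e \<le> norm (F (complex_of_real r))"
      using norming by (simp add: F_def norm_divide le_divide_eq mult.commute)
  qed
qed

lemma M1_nonneg: "0 \<le> M1 a r"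
  unfolding M1_def by (cases "(\<lambda>\<theta>. norm (f (complex_of_real r * cis \<theta>))) integrable_on {0..2*pi}")
    (auto intro!: divide_nonneg_pos integral_nonneg simp: not_integrable_integral)

lemma M1_mono:
  assumes "0 \<le> r" "r < s" "s < R"
  shows "M1 a r \<le> M1 a s"
proof (rule field_le_epsilon)
  fix e :: real assume "0 < e"
  then obtain F where F: "F holomorphic_on ball 0 R"
    and F_le: "\<And>z. norm z < R \<Longrightarrow> norm (F z) \<le> M1 a (norm z)"
    and F_r: "M1 a r - e \<le> norm (F (complex_of_real r))"
    using M1_approx_by_holomorphic assms by (metis order.strict_trans)
  have "norm (F (complex_of_real r)) \<le> M1 a s"
  proof (rule maximum_modulus_frontier[of F "ball 0 s"])
    show "F holomorphic_on interior (ball 0 s)" "continuous_on (closure (ball 0 s)) F"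
      using F holomorphic_on_imp_continuous_on[OF F] assms
      by (auto intro: holomorphic_on_subset continuous_on_subset)
    show "norm (F z) \<le> M1 a s" if "z \<in> frontier (ball 0 s)" for z
      using that F_le[of z] assms by auto
  qed (use assms in auto)
  then show "M1 a r \<le> M1 a s + e" using F_r by simp
qed

lemma weighted_norm_le_max_on_annulus:
  assumes F: "F holomorphic_on ball 0 R" and F_le: "\<And>z. norm z < R \<Longrightarrow> norm (F z) \<le> M1 a (norm z)"
    and r: "0 < r1" "r1 < r" "r < r2" "r2 < R"
  shows "r powi p * norm (F (complex_of_real r)) ^ q \<le> max (r1 powi p * M1 a r1 ^ q) (r2 powi p * M1 a r2 ^ q)"
    (is "_ \<le> ?B")
proof -
  define S where "S = {z::complex. r1 < norm z \<and> norm z < r2}"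
  define K where "K = {z::complex. r1 \<le> norm z \<and> norm z \<le> r2}"
  have "open S" "closed K" unfolding S_def K_def
    by (intro open_Collect_conj open_Collect_less closed_Collect_conj closed_Collect_le continuous_intros)+
  moreover have "S \<subseteq> K" unfolding S_def K_def by auto
  ultimately have closure_S: "closure S \<subseteq> K" and frontier_S: "frontier S \<subseteq> {z. norm z = r1 \<or> norm z = r2}"
    using closure_minimal[of S K] unfolding frontier_def interior_open[OF \<open>open S\<close>]
    by (auto simp: S_def K_def)
  define G where "G = (\<lambda>z. z powi p * F z ^ q)"
  have "G holomorphic_on K" unfolding G_def
    by (intro holomorphic_intros holomorphic_on_subset[OF F]) (use r in \<open>auto simp: K_def\<close>)
  have "norm (G (complex_of_real r)) \<le> ?B"
  proof (rule maximum_modulus_frontier[of G S])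
    show "G holomorphic_on interior S"
      using \<open>G holomorphic_on K\<close> \<open>S \<subseteq> K\<close> interior_subset by (blast intro: holomorphic_on_subset)
    show "continuous_on (closure S) G"
      using holomorphic_on_imp_continuous_on[OF \<open>G holomorphic_on K\<close>] closure_S by (rule continuous_on_subset)
    show "bounded S" unfolding S_def bounded_iff by (intro exI[of _ r2]) auto
    show "complex_of_real r \<in> S" unfolding S_def using r by simp
    show "norm (G z) \<le> ?B" if "z \<in> frontier S" for z
    proof -
      have z: "norm z = r1 \<or> norm z = r2" using that frontier_S by auto
      then have "norm (F z) ^ q \<le> M1 a (norm z) ^ q"
        using F_le[of z] r by (intro power_mono) auto
      then have "norm (G z) \<le> norm z powi p * M1 a (norm z) ^ q"
        using z r by (auto simp: G_def norm_mult norm_power_int norm_power intro!: mult_left_mono)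
      then show ?thesis using z by auto
    qed
  qed
  then show ?thesis using r by (simp add: G_def norm_mult norm_power_int norm_power)
qed

lemma M1_three_circles:
  assumes r: "0 < r1" "r1 < r" "r < r2" "r2 < R" and q: "0 < q"
  shows "r powi p * M1 a r ^ q \<le> max (r1 powi p * M1 a r1 ^ q) (r2 powi p * M1 a r2 ^ q)"
    (is "_ \<le> ?B")
proof -
  have approx: "r powi p * (M1 a r - e) ^ q \<le> ?B" if e: "0 < e" "e < M1 a r" for e
  proof -
    obtain F where "F holomorphic_on ball 0 R" "\<And>z. norm z < R \<Longrightarrow> norm (F z) \<le> M1 a (norm z)"
      and F_r: "M1 a r - e \<le> norm (F (complex_of_real r))"
      using M1_approx_by_holomorphic[of r e] r e by auto
    then have "r powi p * norm (F (complex_of_real r)) ^ q \<le> ?B"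
      using weighted_norm_le_max_on_annulus[OF _ _ r] by blast
    moreover have "(M1 a r - e) ^ q \<le> norm (F (complex_of_real r)) ^ q"
      using F_r e by (intro power_mono) auto
    then have "r powi p * (M1 a r - e) ^ q \<le> r powi p * norm (F (complex_of_real r)) ^ q"
      using r by (intro mult_left_mono) auto
    ultimately show ?thesis by linarith
  qed
  show ?thesis
  proof (cases "M1 a r = 0")
    case True
    then show ?thesis using M1_nonneg q r by (auto simp: power_0_left intro: max.coboundedI1)
  next
    case False
    then have "0 < M1 a r" using M1_nonneg[of r] by simp
    then have "eventually (\<lambda>e. 0 < e \<and> e < M1 a r) (at_right 0)"
      using eventually_at_right_real by (simp add: eventually_at_right_field)
    then have "eventually (\<lambda>e. r powi p * (M1 a r - e) ^ q \<le> ?B) (at_right 0)"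
      by (rule eventually_mono) (use approx in blast)
    moreover have "((\<lambda>e. r powi p * (M1 a r - e) ^ q) \<longlongrightarrow> r powi p * (M1 a r - 0) ^ q) (at_right 0)"
      by (intro tendsto_intros)
    ultimately have "r powi p * (M1 a r - 0) ^ q \<le> ?B"
      by (intro tendsto_le[OF _ tendsto_const]) simp_all
    then show ?thesis by simp
  qed
qed

lemma M1_tendsto_hardy_norm: "((\<lambda>r. ereal (M1 a r)) \<longlongrightarrow> hardy_norm a R) (at_left R)"
proof (rule order_tendstoI)
  fix y assume "y < hardy_norm a R"
  then obtain r0 where r0: "r0 \<in> {0<..<R}" "y < ereal (M1 a r0)"
    unfolding hardy_norm_def less_SUP_iff by blast
  have "eventually (\<lambda>r. r \<in> {r0<..<R}) (at_left R)"
    using r0 by (intro eventually_at_left_real) auto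
  then show "eventually (\<lambda>r. y < ereal (M1 a r)) (at_left R)"
  proof eventually_elim
    case (elim r)
    then show ?case using r0 M1_mono[of r0 r] by (auto intro: less_le_trans)
  qed
next
  fix y assume y: "hardy_norm a R < y"
  have "eventually (\<lambda>r. r \<in> {0<..<R}) (at_left R)"
    using radius_pos by (intro eventually_at_left_real) auto
  then show "eventually (\<lambda>r. ereal (M1 a r) < y) (at_left R)"
  proof eventually_elim
    case (elim r)
    then have "ereal (M1 a r) \<le> hardy_norm a R"
      unfolding hardy_norm_def by (rule SUP_upper)
    then show ?case using y by simp
  qed
qed

lemma radial_norm_lipschitz:
  assumes "\<rho> < R"
  obtains L where "0 \<le> L" "\<And>r s t. \<bar>r\<bar> \<le> \<rho> \<Longrightarrow> \<bar>s\<bar> \<le> \<rho> \<Longrightarrow>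
    \<bar>norm (f (complex_of_real s * cis t)) - norm (f (complex_of_real r * cis t))\<bar> \<le> L * \<bar>s - r\<bar>"
proof -
  obtain L where "0 \<le> L"
    and lip: "\<And>x y. x \<in> cball 0 \<rho> \<Longrightarrow> y \<in> cball 0 \<rho> \<Longrightarrow> norm (f x - f y) \<le> L * norm (x - y)"
    using holomorphic_lipschitz_on_cball[OF pser_holomorphic assms] by blast
  moreover have "\<bar>norm (f (complex_of_real s * cis t)) - norm (f (complex_of_real r * cis t))\<bar> \<le> L * \<bar>s - r\<bar>"
    if "\<bar>r\<bar> \<le> \<rho>" "\<bar>s\<bar> \<le> \<rho>" for r s t
  proof -
    have "\<bar>norm (f (complex_of_real s * cis t)) - norm (f (complex_of_real r * cis t))\<bar>
          \<le> norm (f (complex_of_real s * cis t) - f (complex_of_real r * cis t))"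
      by (rule norm_triangle_ineq3)
    also have "\<dots> \<le> L * norm (complex_of_real s * cis t - complex_of_real r * cis t)"
      by (rule lip) (use that in \<open>auto simp: norm_mult\<close>)
    also have "norm (complex_of_real s * cis t - complex_of_real r * cis t) = \<bar>s - r\<bar>"
      by (simp add: left_diff_distrib[symmetric] norm_mult flip: of_real_diff)
    finally show ?thesis .
  qed
  ultimately show thesis using that by blast
qed

lemma radial_norm_has_real_derivative:
  assumes "\<bar>r\<bar> < R" and f_nonzero: "f (complex_of_real r * cis t) \<noteq> 0"
  shows "((\<lambda>s. norm (f (complex_of_real s * cis t))) has_real_derivative
           deriv (\<lambda>s. norm (f (complex_of_real s * cis t))) r) (at r)"
proof -
  have "((\<lambda>s. complex_of_real s * cis t) has_vector_derivative cis t) (at r)"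
    by (auto intro!: derivative_eq_intros)
  moreover have "(f has_field_derivative deriv f (complex_of_real r * cis t)) (at (complex_of_real r * cis t))"
    by (rule holomorphic_derivI[OF pser_holomorphic open_ball]) (use assms in \<open>simp add: norm_mult\<close>)
  ultimately have "(f \<circ> (\<lambda>s. complex_of_real s * cis t)) differentiable (at r)"
    using differentiableI_vector field_vector_diff_chain_at by blast
  then have "(norm \<circ> (f \<circ> (\<lambda>s. complex_of_real s * cis t))) differentiable (at r)"
    by (rule differentiable_chain_at) (use f_nonzero in simp)
  then show ?thesis unfolding o_def by (simp add: DERIV_deriv_iff_real_differentiable)
qed

lemma x_mult_deriv_sigma_le_nu: "0 < x \<Longrightarrow> x < R \<Longrightarrow> ereal (x * deriv (sigma a) x) \<le> nu a R"
  unfolding nu_def by (intro SUP_upper) auto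

lemma kappa_tendsto_hardy_norm:
  assumes "a n \<noteq> 0"
  shows "((\<lambda>r. ereal (kappa a n r)) \<longlongrightarrow> hardy_norm a R / ereal (norm (a n) * R ^ n)) (at_left R)"
proof -
  have pos: "0 < norm (a n) * R ^ n" using assms radius_pos by simp
  have "((\<lambda>r. ereal (1 / (norm (a n) * r ^ n))) \<longlongrightarrow> ereal (1 / (norm (a n) * R ^ n))) (at_left R)"
    using assms radius_pos by (intro tendsto_ereal tendsto_intros) auto
  then have "((\<lambda>r. ereal (M1 a r) * ereal (1 / (norm (a n) * r ^ n)))
               \<longlongrightarrow> hardy_norm a R * ereal (1 / (norm (a n) * R ^ n))) (at_left R)"
    by (intro tendsto_mult_ereal[OF M1_tendsto_hardy_norm]) (use pos radius_pos in auto)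
  moreover have "ereal (M1 a r) * ereal (1 / (norm (a n) * r ^ n)) = ereal (kappa a n r)" for r
    by (simp add: kappa_def)
  moreover have "x / ereal (norm (a n) * R ^ n) = x * ereal (1 / (norm (a n) * R ^ n))" for x
    using assms radius_pos by (simp add: divide_ereal_def inverse_eq_divide)
  ultimately show ?thesis by simp
qed

end

locale nonzero_power_series_disc = power_series_disc +
  assumes nonzero: "a \<noteq> (\<lambda>_. 0)"
begin

lemma pser_not_identically_zero: "\<exists>z\<in>ball 0 R. f z \<noteq> 0"
proof (rule ccontr)
  assume "\<not> ?thesis"
  then have "eventually (\<lambda>z. eval_fps (Abs_fps a) z = eval_fps 0 z) (nhds 0)"
    using eventually_nhds_in_open[of "ball 0 R" 0] radius_pos by (auto simp: eval_fps_def pser_def elim!: eventually_mono)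
  moreover have "fps_conv_radius (Abs_fps a) > 0" "fps_conv_radius (0 :: complex fps) > 0"
    using conv_radius_eq radius_pos by (auto simp: fps_conv_radius_def)
  ultimately have "Abs_fps a = 0" using eval_fps_eqD by blast
  then show False using nonzero by (metis fps_nth_Abs_fps fps_zero_nth ext)
qed

lemma finite_zeros_on_sphere:
  assumes "r < R"
  shows "finite {z \<in> sphere 0 r. f z = 0}"
proof (cases "f constant_on ball 0 R")
  case True
  then obtain c where c: "\<And>z. z \<in> ball 0 R \<Longrightarrow> f z = c" unfolding constant_on_def by blast
  then have "c \<noteq> 0" using pser_not_identically_zero by auto
  then show ?thesis using c assms by (auto intro: finite_subset[of _ "{}"])
next
  case False
  moreover have "sphere 0 r \<subseteq> ball 0 R" using assms by auto
  ultimately show ?thesis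
    using holomorphic_compact_finite_zeros[OF pser_holomorphic open_ball connected_ball compact_sphere] by blast
qed

lemma finite_zeros_on_circle:
  assumes r: "0 < r" "r < R"
  shows "finite {t \<in> {0..2*pi}. f (complex_of_real r * cis t) = 0}"
proof -
  have "inj_on (\<lambda>t. complex_of_real r * cis t) {0..<2*pi}"
    by (rule inj_on_inverseI[where g = Arg2pi]) (use r in \<open>auto intro: Arg2pi_unique simp: cis_conv_exp\<close>)
  then have "finite ((\<lambda>t. complex_of_real r * cis t) -` {z \<in> sphere 0 r. f z = 0} \<inter> {0..<2*pi})"
    using finite_zeros_on_sphere[OF r(2)] by (rule finite_vimage_IntI[rotated])
  then have "finite (insert (2*pi) ((\<lambda>t. complex_of_real r * cis t) -` {z \<in> sphere 0 r. f z = 0} \<inter> {0..<2*pi}))"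
    by simp
  then show ?thesis
    by (rule finite_subset[rotated]) (use r in \<open>auto simp: norm_mult\<close>)
qed

lemma M1_pos:
  assumes r: "0 < r" "r < R"
  shows "0 < M1 a r"
proof -
  define h where "h = (\<lambda>t. norm (f (complex_of_real r * cis t)))"
  have h: "continuous_on {0..2*pi} h" unfolding h_def
    by (intro continuous_intros continuous_on_subset[OF continuous_on_circle]) (use r in auto)
  have "infinite {0..2*pi::real}" by (simp add: infinite_Icc)
  then have "\<not> {0..2*pi} \<subseteq> {t \<in> {0..2*pi}. f (complex_of_real r * cis t) = 0}"
    using finite_subset finite_zeros_on_circle[OF r] by blast
  then obtain t where t: "t \<in> {0..2*pi}" "f (complex_of_real r * cis t) \<noteq> 0"
    by blast
  have "integral {0..2*pi} h \<noteq> 0"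
    using integral_eq_0_iff[of 0 "2*pi" h] h t unfolding h_def by (auto simp: mem_Collect_eq)
  moreover have "0 \<le> integral {0..2*pi} h"
    by (rule integral_nonneg) (use integrable_continuous_real[OF h] in \<open>auto simp: h_def\<close>)
  ultimately show ?thesis unfolding M1_def h_def by simp
qed

lemma M1_differentiable:
  assumes r: "0 < r" "r < R"
  obtains D where "(M1 a has_real_derivative D) (at r)"
proof -
  define \<rho> where "\<rho> = (r + R) / 2"
  define \<delta> where "\<delta> = min r (\<rho> - r)"
  have \<rho>: "r < \<rho>" "\<rho> < R" and \<delta>: "0 < \<delta>" unfolding \<rho>_def \<delta>_def using r by auto
  obtain L where L: "0 \<le> L" and lip: "\<And>r s t. \<bar>r\<bar> \<le> \<rho> \<Longrightarrow> \<bar>s\<bar> \<le> \<rho> \<Longrightarrow>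
      \<bar>norm (f (complex_of_real s * cis t)) - norm (f (complex_of_real r * cis t))\<bar> \<le> L * \<bar>s - r\<bar>"
    using radial_norm_lipschitz[OF \<rho>(2)] by blast
  define h where "h = (\<lambda>s t. norm (f (complex_of_real s * cis t)))"
  have ball: "0 \<le> s" "s \<le> \<rho>" if "s \<in> ball r \<delta>" for s
    using that unfolding \<delta>_def by (auto simp: dist_real_def)
  have "((\<lambda>s. integral {0..2*pi} (h s)) has_real_derivative integral {0..2*pi} (\<lambda>t. deriv (\<lambda>s. h s t) r)) (at r)"
  proof (rule has_real_derivative_integral_finite_exceptions[OF finite_zeros_on_circle[OF r] \<delta> L])
    show "h s integrable_on {0..2*pi}" if "s \<in> ball r \<delta>" for s
      unfolding h_def using ball[OF that] \<rho>
      by (intro integrable_continuous_real continuous_intros continuous_on_subset[OF continuous_on_circle]) auto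
    show "\<bar>h s t - h r t\<bar> \<le> L * \<bar>s - r\<bar>" if "s \<in> ball r \<delta>" for s t
      unfolding h_def using lip ball[OF that] r \<rho> by simp
    show "((\<lambda>s. h s t) has_real_derivative deriv (\<lambda>s. h s t) r) (at r)"
      if "t \<notin> {t \<in> {0..2*pi}. f (complex_of_real r * cis t) = 0}" "t \<in> {0..2*pi}" for t
      unfolding h_def using that r by (intro radial_norm_has_real_derivative) auto
  qed
  moreover have "M1 a = (\<lambda>s. integral {0..2*pi} (h s) / (2*pi))"
    unfolding M1_def h_def by auto
  ultimately show thesis using that DERIV_cdivide by metis
qed

lemma sigma_has_real_derivative:
  assumes r: "0 < r" "r < R"
  shows "(sigma a has_real_derivative deriv (sigma a) r) (at r)"
proof -
  obtain D where D: "(M1 a has_real_derivative D) (at r)" using M1_differentiable[OF r] .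
  have "((\<lambda>x. ln (M1 a x)) has_real_derivative (1 / M1 a r) * D) (at r)"
    using DERIV_chain2[OF DERIV_ln_divide[OF M1_pos[OF r]] D] .
  then have "(sigma a has_real_derivative (1 / M1 a r) * D) (at r)"
    unfolding sigma_def[abs_def] .
  then show ?thesis by (simp add: DERIV_imp_deriv)
qed

lemma x_mult_deriv_sigma_mono:
  assumes "0 < r1" "r1 < r2" "r2 < R"
  shows "r1 * deriv (sigma a) r1 \<le> r2 * deriv (sigma a) r2"
  using x_mult_deriv_ln_mono_of_weighted_max[of R "M1 a" "deriv (sigma a)"] M1_pos
    sigma_has_real_derivative M1_three_circles assms
  unfolding sigma_def[abs_def] by blast

lemma kappa_eq_exp:
  assumes "a n \<noteq> 0" "0 < x" "x < R"
  shows "kappa a n x = exp (sigma a x - n * ln x) / norm (a n)"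
  using M1_pos[of x] assms by (simp add: kappa_def sigma_def exp_diff exp_of_nat_mult)

lemma log_kappa_has_real_derivative:
  fixes n :: nat
  assumes "0 < x" "x < R"
  shows "((\<lambda>x. sigma a x - n * ln x) has_real_derivative (x * deriv (sigma a) x - n) / x) (at x)"
proof -
  have "((\<lambda>x. sigma a x - n * ln x) has_real_derivative deriv (sigma a) x - n * (1 / x)) (at x)"
    by (intro DERIV_diff DERIV_cmult sigma_has_real_derivative DERIV_ln_divide assms)
  then show ?thesis using assms by (simp add: field_simps)
qed

lemma kappa_strict_decreasing:
  assumes n: "a n \<noteq> 0" and rs: "0 < r" "r < s" "s < R"
    and slope: "\<And>x. r \<le> x \<Longrightarrow> x \<le> s \<Longrightarrow> x * deriv (sigma a) x < n"
  shows "kappa a n s < kappa a n r"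
proof -
  have "sigma a s - n * ln s < sigma a r - n * ln r"
  proof (rule DERIV_neg_imp_decreasing[OF rs(2)])
    fix x assume x: "r \<le> x" "x \<le> s"
    then show "\<exists>y. ((\<lambda>x. sigma a x - n * ln x) has_real_derivative y) (at x) \<and> y < 0"
      using log_kappa_has_real_derivative[of x n] slope[OF x] rs by (auto simp: divide_neg_pos)
  qed
  then show ?thesis using kappa_eq_exp[OF n] rs n by (simp add: divide_strict_right_mono)
qed

lemma kappa_strict_increasing:
  assumes n: "a n \<noteq> 0" and rs: "0 < r" "r < s" "s < R"
    and slope: "\<And>x. r \<le> x \<Longrightarrow> x \<le> s \<Longrightarrow> n < x * deriv (sigma a) x"
  shows "kappa a n r < kappa a n s"
proof -
  have "sigma a r - n * ln r < sigma a s - n * ln s"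
  proof (rule DERIV_pos_imp_increasing[OF rs(2)])
    fix x assume x: "r \<le> x" "x \<le> s"
    then show "\<exists>y. ((\<lambda>x. sigma a x - n * ln x) has_real_derivative y) (at x) \<and> 0 < y"
      using log_kappa_has_real_derivative[of x n] slope[OF x] rs by auto
  qed
  then show ?thesis using kappa_eq_exp[OF n] rs n by (simp add: divide_strict_right_mono)
qed

lemma kappa_strict_decreasing_of_nu_less:
  assumes n: "a n \<noteq> 0" and nu: "nu a R < ereal n" and rs: "0 < r" "r < s" "s < R"
  shows "kappa a n s < kappa a n r"
proof (rule kappa_strict_decreasing[OF n rs])
  show "x * deriv (sigma a) x < n" if "r \<le> x" "x \<le> s" for x
    using le_less_trans[OF x_mult_deriv_sigma_le_nu nu] that rs by simp
qed

lemma kappa_strict_increasing_near_radius: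
  assumes n: "a n \<noteq> 0" and nu: "nu a R = \<infinity>"
  obtains r0 where "0 < r0" "r0 < R" "\<And>r s. r0 < r \<Longrightarrow> r < s \<Longrightarrow> s < R \<Longrightarrow> kappa a n r < kappa a n s"
proof -
  have "ereal n < nu a R" using nu by simp
  then obtain r0 where r0: "0 < r0" "r0 < R" "ereal n < ereal (r0 * deriv (sigma a) r0)"
    unfolding nu_def less_SUP_iff by auto
  have slope: "n < x * deriv (sigma a) x" if "r0 \<le> x" "x < R" for x
    using x_mult_deriv_sigma_mono[of r0 x] r0 that by (cases "x = r0") auto
  show thesis
  proof (rule that[OF r0(1,2)])
    show "kappa a n r < kappa a n s" if "r0 < r" "r < s" "s < R" for r s
      by (rule kappa_strict_increasing[OF n]) (use r0 that slope in auto)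
  qed
qed

end

theorem theorem4p5:
  fixes a :: "nat \<Rightarrow> complex" and R :: real and n :: nat
  assumes "conv_radius a = ereal R" and "0 < R" and "a n \<noteq> 0"
  shows "((\<lambda>r. ereal (kappa a n r)) \<longlongrightarrow>
            hardy_norm a R / ereal (norm (a n) * R ^ n)) (at_left R)
       \<and> ((hardy_norm a R / ereal (norm (a n) * R ^ n) < \<infinity>) \<longleftrightarrow> in_hardy_H1 a R)
       \<and> (ereal (real n) > nu a R \<longrightarrow>
           (\<forall>r s. 0 < r \<longrightarrow> r < s \<longrightarrow> s < R \<longrightarrow> kappa a n s < kappa a n r))
       \<and> (nu a R = \<infinity> \<longrightarrow>
           (\<exists>r0. 0 \<le> r0 \<and> r0 < R \<and>
              (\<forall>r s. r0 < r \<longrightarrow> r < s \<longrightarrow> s < R \<longrightarrow> kappa a n r < kappa a n s)))"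
proof (intro conjI impI)
  interpret nonzero_power_series_disc a R
    using assms by unfold_locales auto
  show "((\<lambda>r. ereal (kappa a n r)) \<longlongrightarrow> hardy_norm a R / ereal (norm (a n) * R ^ n)) (at_left R)"
    using kappa_tendsto_hardy_norm[OF assms(3)] .
  show "(hardy_norm a R / ereal (norm (a n) * R ^ n) < \<infinity>) \<longleftrightarrow> in_hardy_H1 a R"
    using assms by (cases "hardy_norm a R") (auto simp: in_hardy_H1_def)
  show "\<forall>r s. 0 < r \<longrightarrow> r < s \<longrightarrow> s < R \<longrightarrow> kappa a n s < kappa a n r" if "nu a R < ereal n"
    using kappa_strict_decreasing_of_nu_less[OF assms(3) that] by blast
  show "\<exists>r0. 0 \<le> r0 \<and> r0 < R \<and> (\<forall>r s. r0 < r \<longrightarrow> r < s \<longrightarrow> s < R \<longrightarrow> kappa a n r < kappa a n s)"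
    if "nu a R = \<infinity>"
    using kappa_strict_increasing_near_radius[OF assms(3) that] by (metis less_imp_le)
qed

end
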